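(* Let $\varrho=\mathrm{Tr}_B|\psi\rangle\langle\psi|$ have eigenvalues $p_1,\dots,p_d$ and eigenbasis $\{|i\rangle\}$, and let $V_\Lambda=\sum_i\lambda_i|i\rangle\langle i|$. Then $$\sqrt{F^\Lambda_\psi}=\max_{U\ \text{unitary}}\Big|\mathrm{Tr}[UV_\Lambda U^\dagger\varrho]\Big|=\max_{U}\Big|\sum_{i}\lambda_i\sum_j p_j|u_{ij}|^2\Big|,\quad u_{ij}=\langle i|U|j\rangle,$$ and the maximum over $U$ is attained at a permutation matrix. Consequently $\sqrt{F^\Lambda_\psi}=\max_{\sigma\in S_d}\big|\sum_{i=1}^d\lambda_i\,p_{\sigma(i)}\big|$, and there is a maximizing $W\in\mathcal{W}_\Lambda$ that is diagonal in the eigenbasis of $\varrho$, so that $[W,\varrho]=0$.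
   Context: Let $d=d_A\le d_B$ and let $|\psi\rangle\in\mathbb{C}^{d_A}\otimes\mathbb{C}^{d_B}$ be a unit vector. A spectrum is a multiset $\Lambda=\{\lambda_1,\dots,\lambda_d\}$ of unimodular complex numbers $\lambda_j=e^{i\theta_j}$. Let $\mathcal{W}_\Lambda$ be the set of unitary $d\times d$ matrices acting on $\mathbb{C}^{d_A}$ whose eigenvalues, counted with multiplicity, are exactly $\Lambda$. Define $F^\Lambda_\psi=\max_{W\in\mathcal{W}_\Lambda}|\langle\psi|(W\otimes \mathbb{1}_B)|\psi\rangle|^2$. $S_d$ denotes the symmetric group on $\{1,\dots,d\}$. *)

theory Defs
  imports "Jordan_Normal_Form.Matrix" "Jordan_Normal_Form.Char_Poly"
          "HOL-Combinatorics.Permutations"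
begin

definition adj :: "complex mat \<Rightarrow> complex mat" where
  "adj A = mat (dim_col A) (dim_row A) (\<lambda>(i,j). cnj (A $$ (j,i)))"

definition unitary_mat :: "nat \<Rightarrow> complex mat \<Rightarrow> bool" where
  "unitary_mat d U \<longleftrightarrow> U \<in> carrier_mat d d \<and> adj U * U = 1\<^sub>m d \<and> U * adj U = 1\<^sub>m d"

definition diagm :: "nat \<Rightarrow> (nat \<Rightarrow> complex) \<Rightarrow> complex mat" where
  "diagm d f = mat d d (\<lambda>(i,j). if i = j then f i else 0)"

definition perm_mat :: "nat \<Rightarrow> (nat \<Rightarrow> nat) \<Rightarrow> complex mat" where
  "perm_mat d \<sigma> = mat d d (\<lambda>(i,j). if i = \<sigma> j then 1 else 0)"

text \<open>The set W_Lambda: unitary d x d matrices whose eigenvalues counted with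
  multiplicity (roots of the characteristic polynomial) are lam 0, ..., lam (d-1).\<close>
definition W_set :: "nat \<Rightarrow> (nat \<Rightarrow> complex) \<Rightarrow> complex mat set" where
  "W_set d lam = {W. unitary_mat d W \<and> char_poly W = (\<Prod>i<d. [:- lam i, 1:])}"

text \<open>A vector psi in C^dA (x) C^dB is stored by its coefficients psi a b
  (a < dA, b < dB).  Expectation value of W (x) 1_B in the state psi.\<close>
definition expval :: "nat \<Rightarrow> nat \<Rightarrow> (nat \<Rightarrow> nat \<Rightarrow> complex) \<Rightarrow> complex mat \<Rightarrow> complex" where
  "expval dA dB psi W =
     (\<Sum>a<dA. \<Sum>a'<dA. \<Sum>b<dB. cnj (psi a b) * W $$ (a,a') * psi a' b)"

definition fid :: "nat \<Rightarrow> nat \<Rightarrow> (nat \<Rightarrow> nat \<Rightarrow> complex) \<Rightarrow> complex mat \<Rightarrow> real" where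
  "fid dA dB psi W = (cmod (expval dA dB psi W))\<^sup>2"

text \<open>F^Lambda_psi, the maximum of fid over W_Lambda (as a supremum; attainment is
  part of the theorem).\<close>
definition F_Lam :: "nat \<Rightarrow> nat \<Rightarrow> (nat \<Rightarrow> complex) \<Rightarrow> (nat \<Rightarrow> nat \<Rightarrow> complex) \<Rightarrow> real" where
  "F_Lam dA dB lam psi = (SUP W \<in> W_set dA lam. fid dA dB psi W)"

definition red_state :: "nat \<Rightarrow> nat \<Rightarrow> (nat \<Rightarrow> nat \<Rightarrow> complex) \<Rightarrow> complex mat" where
  "red_state dA dB psi = mat dA dA (\<lambda>(i,j). \<Sum>b<dB. psi i b * cnj (psi j b))"

definition tr :: "complex mat \<Rightarrow> complex" where
  "tr A = (\<Sum>i<dim_row A. A $$ (i,i))"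

definition is_max :: "real set \<Rightarrow> real \<Rightarrow> bool" where
  "is_max S x \<longleftrightarrow> x \<in> S \<and> (\<forall>y\<in>S. y \<le> x)"

end

theory Submission
  imports Defs
begin

text \<open>
  Write \<open>\<rho> = Q diag(p) Q\<^sup>\<dagger>\<close>.  By the spectral theorem every \<open>W \<in> \<W>\<^sub>\<Lambda>\<close> is
  \<open>R diag(\<lambda>) R\<^sup>\<dagger>\<close> for a unitary \<open>R\<close>, and \<open>\<langle>\<psi>|W \<otimes> 1|\<psi>\<rangle> = Tr(W\<rho>)
  = \<Sum>\<^sub>i \<lambda>\<^sub>i \<Sum>\<^sub>j p\<^sub>j |X\<^sub>i\<^sub>j|\<^sup>2\<close> with \<open>X = R\<^sup>\<dagger>Q\<close> unitary.  The matrix \<open>(|X\<^sub>i\<^sub>j|\<^sup>2)\<close> is doubly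
  stochastic, so after rotating by a phase the modulus of this sum is a real bilinear form in a
  doubly stochastic matrix, which a rearrangement argument bounds by its value at a permutation.
  Permutation matrices attain the bound, which yields all parts of the theorem at once.
\<close>

section \<open>Adjoints and unitary matrices\<close>

lemma mult_mat_ent:
  assumes "A \<in> carrier_mat n k" "B \<in> carrier_mat k m" "i < n" "j < m"
  shows "(A * B) $$ (i,j) = (\<Sum>l<k. A $$ (i,l) * B $$ (l,j))"
  using assms by (auto simp: scalar_prod_def atLeast0LessThan intro!: sum.cong)

lemma adj_dims [simp]: "dim_row (adj A) = dim_col A" "dim_col (adj A) = dim_row A"
  by (simp_all add: adj_def)

lemma adj_carrier [simp]: "A \<in> carrier_mat n m \<Longrightarrow> adj A \<in> carrier_mat m n"
  unfolding carrier_mat_def by simp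

lemma adj_ent [simp]: "i < dim_col A \<Longrightarrow> j < dim_row A \<Longrightarrow> adj A $$ (i,j) = cnj (A $$ (j,i))"
  by (simp add: adj_def)

lemma adj_adj [simp]: "adj (adj A) = A"
  by (rule eq_matI) auto

lemma adj_one [simp]: "adj (1\<^sub>m n) = 1\<^sub>m n"
  by (rule eq_matI) auto

lemma adj_mult:
  assumes A: "A \<in> carrier_mat n k" and B: "B \<in> carrier_mat k m"
  shows "adj (A * B) = adj B * adj A"
proof (rule eq_matI)
  fix i j assume "i < dim_row (adj B * adj A)" "j < dim_col (adj B * adj A)"
  then have i: "i < m" and j: "j < n" using assms by auto
  have "adj (A * B) $$ (i, j) = cnj ((A * B) $$ (j,i))"
    using A B i j by (intro adj_ent) auto
  also have "\<dots> = (\<Sum>l<k. cnj (A $$ (j,l)) * cnj (B $$ (l,i)))"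
    by (simp add: mult_mat_ent[OF A B j i] cnj_sum del: index_mult_mat)
  also have "\<dots> = (adj B * adj A) $$ (i, j)"
    using A B i j by (simp add: mult_mat_ent[OF adj_carrier[OF B] adj_carrier[OF A] i j]
        mult.commute del: index_mult_mat)
  finally show "adj (A * B) $$ (i, j) = (adj B * adj A) $$ (i, j)" .
qed (use assms in auto)

lemma mult_cnj_cmod: "z * cnj z = complex_of_real ((cmod z)\<^sup>2)"
  by (simp add: complex_mult_cnj cmod_power2)

lemma cnj_mult_cmod: "cnj z * z = complex_of_real ((cmod z)\<^sup>2)"
  by (simp add: complex_mult_cnj cmod_power2 mult.commute)

lemma unitary_carrier: "unitary_mat n U \<Longrightarrow> U \<in> carrier_mat n n"
  by (simp add: unitary_mat_def)

lemma unitary_one: "unitary_mat n (1\<^sub>m n)"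
  by (simp add: unitary_mat_def)

lemma unitary_adj: "unitary_mat n A \<Longrightarrow> unitary_mat n (adj A)"
  unfolding unitary_mat_def by simp

lemma unitary_cancel:
  assumes "unitary_mat n H" "X \<in> carrier_mat n k"
  shows "H * (adj H * X) = X" "adj H * (H * X) = X"
proof -
  have Hc: "H \<in> carrier_mat n n" and h1: "adj H * H = 1\<^sub>m n" and h2: "H * adj H = 1\<^sub>m n"
    using assms by (auto simp: unitary_mat_def)
  have aH: "adj H \<in> carrier_mat n n" using Hc by simp
  show "H * (adj H * X) = X"
    using assoc_mult_mat[OF Hc aH assms(2)] h2 assms(2) by simp
  show "adj H * (H * X) = X"
    using assoc_mult_mat[OF aH Hc assms(2)] h1 assms(2) by simp
qed

lemma unitary_mult:
  assumes A: "unitary_mat n A" and B: "unitary_mat n B"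
  shows "unitary_mat n (A * B)"
proof -
  have Ac: "A \<in> carrier_mat n n" and Bc: "B \<in> carrier_mat n n"
    using A B by (simp_all add: unitary_mat_def)
  have aAc: "adj A \<in> carrier_mat n n" and aBc: "adj B \<in> carrier_mat n n"
    using Ac Bc by simp_all
  have "adj (A * B) * (A * B) = adj B * (adj A * (A * B))"
    unfolding adj_mult[OF Ac Bc] by (rule assoc_mult_mat[OF aBc aAc mult_carrier_mat[OF Ac Bc]])
  also have "\<dots> = 1\<^sub>m n"
    using B by (simp add: unitary_cancel(2)[OF A Bc] unitary_mat_def)
  finally have 1: "adj (A * B) * (A * B) = 1\<^sub>m n" .
  have "(A * B) * adj (A * B) = A * (B * (adj B * adj A))"
    unfolding adj_mult[OF Ac Bc] by (rule assoc_mult_mat[OF Ac Bc mult_carrier_mat[OF aBc aAc]])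
  also have "\<dots> = 1\<^sub>m n"
    using A by (simp add: unitary_cancel(1)[OF B aAc] unitary_mat_def)
  finally have 2: "(A * B) * adj (A * B) = 1\<^sub>m n" .
  show ?thesis unfolding unitary_mat_def using 1 2 Ac Bc by simp
qed

text \<open>Rows and columns of a unitary matrix are unit vectors; hence the matrix of squared
  moduli of its entries is doubly stochastic.\<close>

lemma unitary_row_norm:
  assumes "unitary_mat n X" "i < n"
  shows "(\<Sum>j<n. (cmod (X $$ (i,j)))\<^sup>2) = 1"
proof -
  have X: "X \<in> carrier_mat n n" and e: "X * adj X = 1\<^sub>m n"
    using assms by (auto simp: unitary_mat_def)
  have "complex_of_real (\<Sum>j<n. (cmod (X $$ (i,j)))\<^sup>2) = (X * adj X) $$ (i,i)"
    using X assms by (simp add: mult_mat_ent[OF X adj_carrier[OF X]] mult_cnj_cmod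
        del: index_mult_mat)
  also have "\<dots> = 1" using e assms by simp
  finally show ?thesis by (simp only: of_real_eq_1_iff)
qed

lemma unitary_col_norm:
  assumes "unitary_mat n X" "j < n"
  shows "(\<Sum>i<n. (cmod (X $$ (i,j)))\<^sup>2) = 1"
proof -
  have X: "X \<in> carrier_mat n n" and e: "adj X * X = 1\<^sub>m n"
    using assms by (auto simp: unitary_mat_def)
  have "complex_of_real (\<Sum>i<n. (cmod (X $$ (i,j)))\<^sup>2) = (adj X * X) $$ (j,j)"
    using X assms by (simp add: mult_mat_ent[OF adj_carrier[OF X] X] cnj_mult_cmod
        del: index_mult_mat)
  also have "\<dots> = 1" using e assms by simp
  finally show ?thesis by (simp only: of_real_eq_1_iff)
qed

lemma conj_conj:
  assumes U: "U \<in> carrier_mat n n" and Q: "Q \<in> carrier_mat n n" and D: "D \<in> carrier_mat n n"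
  shows "U * (Q * D * adj Q) * adj U = (U * Q) * D * adj (U * Q)"
proof -
  have aQ: "adj Q \<in> carrier_mat n n" and aU: "adj U \<in> carrier_mat n n" using U Q by simp_all
  have QD: "Q * D \<in> carrier_mat n n" using Q D by simp
  have "U * (Q * D * adj Q) * adj U = U * (Q * D * adj Q * adj U)"
    using assoc_mult_mat[OF U mult_carrier_mat[OF QD aQ] aU] .
  also have "Q * D * adj Q * adj U = Q * D * (adj Q * adj U)"
    using assoc_mult_mat[OF QD aQ aU] .
  also have "U * (Q * D * (adj Q * adj U)) = U * Q * D * (adj Q * adj U)"
    using assoc_mult_mat[OF U QD mult_carrier_mat[OF aQ aU]]
      assoc_mult_mat[OF U Q D] by simp
  finally show ?thesis by (simp add: adj_mult[OF U Q])
qed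

lemma conj_cancel:
  assumes Q: "unitary_mat n Q" and P: "P \<in> carrier_mat n n"
  shows "adj Q * (Q * P * adj Q) * Q = P"
proof -
  have Qc: "Q \<in> carrier_mat n n" and aQ: "adj Q \<in> carrier_mat n n" and q: "adj Q * Q = 1\<^sub>m n"
    using Q by (auto simp: unitary_mat_def)
  have QP: "Q * P \<in> carrier_mat n n" using Qc P by simp
  have "adj Q * (Q * P * adj Q) * Q = adj Q * (Q * P * adj Q * Q)"
    using assoc_mult_mat[OF aQ mult_carrier_mat[OF QP aQ] Qc] .
  also have "Q * P * adj Q * Q = Q * P"
    using assoc_mult_mat[OF QP aQ Qc] q right_mult_one_mat[OF QP] by simp
  also have "adj Q * (Q * P) = P"
    using unitary_cancel(2)[OF Q P] .
  finally show ?thesis .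
qed

section \<open>Diagonal and permutation matrices\<close>

lemma diagm_carrier [simp]: "diagm n f \<in> carrier_mat n n"
  by (simp add: diagm_def)

lemma diagm_ent [simp]: "i < n \<Longrightarrow> j < n \<Longrightarrow> diagm n f $$ (i,j) = (if i = j then f i else 0)"
  by (simp add: diagm_def)

lemma diagm_mult: "diagm n f * diagm n g = diagm n (\<lambda>i. f i * g i)"
proof (rule eq_matI)
  fix i j assume "i < dim_row (diagm n (\<lambda>i. f i * g i))" "j < dim_col (diagm n (\<lambda>i. f i * g i))"
  then have i: "i < n" and j: "j < n" by (auto simp: diagm_def)
  have "(diagm n f * diagm n g) $$ (i,j)
      = (\<Sum>l<n. (if i = l then f i else 0) * (if l = j then g l else 0))"
    using i j by (simp add: mult_mat_ent[OF diagm_carrier diagm_carrier i j] del: index_mult_mat)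
  also have "\<dots> = (\<Sum>l<n. if l = i then (if i = j then f i * g i else 0) else 0)"
    by (rule sum.cong) auto
  finally show "(diagm n f * diagm n g) $$ (i,j) = diagm n (\<lambda>i. f i * g i) $$ (i,j)"
    using i j by simp
qed (auto simp: diagm_def)

lemma adj_diagm: "adj (diagm n f) = diagm n (\<lambda>i. cnj (f i))"
  by (rule eq_matI) (auto simp: diagm_def adj_def)

lemma unitary_diagm:
  assumes "\<forall>i<n. cmod (f i) = 1"
  shows "unitary_mat n (diagm n f)"
proof -
  have "diagm n (\<lambda>i. cnj (f i) * f i) = 1\<^sub>m n" "diagm n (\<lambda>i. f i * cnj (f i)) = 1\<^sub>m n"
    using assms by (auto intro!: eq_matI simp: diagm_def cnj_mult_cmod mult_cnj_cmod)
  then show ?thesis unfolding unitary_mat_def adj_diagm diagm_mult by simp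
qed

lemma conj_diagm_ent:
  assumes R: "R \<in> carrier_mat n n" and ij: "i < n" "j < n"
  shows "(R * diagm n f * adj R) $$ (i,j) = (\<Sum>k<n. R $$ (i,k) * f k * cnj (R $$ (j,k)))"
proof -
  have e: "(R * diagm n f) $$ (i,k) = R $$ (i,k) * f k" if "k < n" for k
    using R ij that by (simp add: mult_mat_ent[OF R diagm_carrier] if_distrib
        del: index_mult_mat cong: if_cong)
  show ?thesis
    using R ij e by (simp add: mult_mat_ent[OF mult_carrier_mat[OF R diagm_carrier] adj_carrier[OF R]]
        del: index_mult_mat)
qed

lemma conj_diagm_commute:
  assumes Q: "unitary_mat n Q"
  shows "(Q * diagm n f * adj Q) * (Q * diagm n g * adj Q)
       = (Q * diagm n g * adj Q) * (Q * diagm n f * adj Q)"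
proof -
  have Qc: "Q \<in> carrier_mat n n" using Q by (simp add: unitary_mat_def)
  have prod: "(Q * diagm n a * adj Q) * (Q * diagm n b * adj Q) = Q * diagm n (\<lambda>i. a i * b i) * adj Q"
    for a b
  proof -
    have aQ: "adj Q \<in> carrier_mat n n" using Qc by simp
    have Da: "Q * diagm n a \<in> carrier_mat n n" and Db: "diagm n b * adj Q \<in> carrier_mat n n"
      using mult_carrier_mat[OF Qc diagm_carrier] mult_carrier_mat[OF diagm_carrier aQ] by simp_all
    have "(Q * diagm n a * adj Q) * (Q * diagm n b * adj Q)
        = Q * diagm n a * adj Q * (Q * (diagm n b * adj Q))"
      by (simp only: assoc_mult_mat[OF Qc diagm_carrier aQ, of b])
    also have "\<dots> = Q * diagm n a * (adj Q * (Q * (diagm n b * adj Q)))"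
      by (rule assoc_mult_mat[OF Da aQ mult_carrier_mat[OF Qc Db]])
    also have "\<dots> = Q * (diagm n a * (diagm n b * adj Q))"
      using unitary_cancel(2)[OF Q Db] assoc_mult_mat[OF Qc diagm_carrier Db] by simp
    also have "\<dots> = Q * (diagm n a * diagm n b) * adj Q"
      using assoc_mult_mat[OF diagm_carrier diagm_carrier aQ, of a b]
        assoc_mult_mat[OF Qc mult_carrier_mat[OF diagm_carrier diagm_carrier] aQ, of a b] by simp
    finally show ?thesis by (simp add: diagm_mult)
  qed
  show ?thesis unfolding prod by (simp add: mult.commute)
qed

lemma perm_mat_carrier [simp]: "perm_mat n \<sigma> \<in> carrier_mat n n"
  by (simp add: perm_mat_def)

lemma cnj_indicator [simp]: "cnj (if P then 1 else 0) = (if P then 1 else 0)"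
  by simp

lemma perm_mat_dims [simp]: "dim_row (perm_mat n \<sigma>) = n" "dim_col (perm_mat n \<sigma>) = n"
  by (simp_all add: perm_mat_def)

lemma perm_mat_ent [simp]: "i < n \<Longrightarrow> j < n \<Longrightarrow> perm_mat n \<sigma> $$ (i,j) = (if i = \<sigma> j then 1 else 0)"
  by (simp add: perm_mat_def)

lemma adj_perm_mat:
  assumes perm: "\<sigma> permutes {..<n}"
  shows "adj (perm_mat n \<sigma>) = perm_mat n (inv_into UNIV \<sigma>)"
proof (rule eq_matI)
  fix i j assume "i < dim_row (perm_mat n (inv_into UNIV \<sigma>))" "j < dim_col (perm_mat n (inv_into UNIV \<sigma>))"
  then have "i < n" "j < n" by (simp_all add: perm_mat_def)
  moreover have "j = \<sigma> i \<longleftrightarrow> i = inv_into UNIV \<sigma> j"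
    using permutes_inverses[OF perm] by metis
  ultimately show "adj (perm_mat n \<sigma>) $$ (i,j) = perm_mat n (inv_into UNIV \<sigma>) $$ (i,j)"
    by simp
qed (simp_all add: perm_mat_def)

lemma adj_perm_mat_mult:
  assumes perm: "\<sigma> permutes {..<n}"
  shows "adj (perm_mat n \<sigma>) * perm_mat n \<sigma> = 1\<^sub>m n"
proof (rule eq_matI)
  fix i j assume "i < dim_row (1\<^sub>m n)" "j < dim_col (1\<^sub>m n)"
  then have i: "i < n" and j: "j < n" by auto
  have img: "\<sigma> i < n" using permutes_in_image[OF perm] i by simp
  have "(adj (perm_mat n \<sigma>) * perm_mat n \<sigma>) $$ (i,j)
      = (\<Sum>k<n. (if k = \<sigma> i then 1 else 0) * (if k = \<sigma> j then 1 else 0))"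
    using i j by (simp add: mult_mat_ent[OF adj_carrier[OF perm_mat_carrier] perm_mat_carrier]
        del: index_mult_mat)
  also have "\<dots> = (\<Sum>k<n. if k = \<sigma> i then (if \<sigma> i = \<sigma> j then 1 else 0) else 0)"
    by (rule sum.cong) auto
  also have "\<dots> = (if i = j then 1 else 0)"
    using img permutes_inj[OF perm] by (auto dest: injD)
  finally show "(adj (perm_mat n \<sigma>) * perm_mat n \<sigma>) $$ (i,j) = 1\<^sub>m n $$ (i,j)"
    using i j by simp
qed auto

lemma unitary_perm_mat:
  assumes perm: "\<sigma> permutes {..<n}"
  shows "unitary_mat n (perm_mat n \<sigma>)"
proof -
  have "perm_mat n \<sigma> * adj (perm_mat n \<sigma>) = adj (perm_mat n (inv_into UNIV \<sigma>)) * perm_mat n (inv_into UNIV \<sigma>)"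
    by (simp add: adj_perm_mat[OF perm] adj_perm_mat[OF permutes_inv[OF perm]] permutes_inv_inv[OF perm])
  then show ?thesis
    unfolding unitary_mat_def
    using adj_perm_mat_mult[OF perm] adj_perm_mat_mult[OF permutes_inv[OF perm]] by simp
qed

lemma perm_mat_conj_diagm:
  assumes perm: "\<sigma> permutes {..<n}"
  shows "perm_mat n \<sigma> * diagm n f * adj (perm_mat n \<sigma>) = diagm n (\<lambda>i. f (inv_into UNIV \<sigma> i))"
proof (rule eq_matI)
  fix i j assume "i < dim_row (diagm n (\<lambda>i. f (inv_into UNIV \<sigma> i)))" "j < dim_col (diagm n (\<lambda>i. f (inv_into UNIV \<sigma> i)))"
  then have i: "i < n" and j: "j < n" by (auto simp: diagm_def)
  have "(perm_mat n \<sigma> * diagm n f * adj (perm_mat n \<sigma>)) $$ (i,j)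
      = (\<Sum>k<n. (if i = \<sigma> k then 1 else 0) * f k * (if j = \<sigma> k then 1 else 0))"
    using i j by (simp add: conj_diagm_ent[OF perm_mat_carrier i j])
  also have "\<dots> = (\<Sum>k<n. ((\<lambda>k. (if i = \<sigma> k then 1 else 0) * f k * (if j = \<sigma> k then 1 else 0))
      \<circ> inv_into UNIV \<sigma>) k)"
    by (rule sum.permute[OF permutes_inv[OF perm]])
  also have "\<dots> = (\<Sum>k<n. if k = i then (if i = j then f (inv_into UNIV \<sigma> i) else 0) else 0)"
    by (rule sum.cong) (auto simp: permutes_inverses(1)[OF perm])
  finally show "(perm_mat n \<sigma> * diagm n f * adj (perm_mat n \<sigma>)) $$ (i,j)
      = diagm n (\<lambda>i. f (inv_into UNIV \<sigma> i)) $$ (i,j)"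
    using i j by simp
qed (auto simp: diagm_def)

section \<open>The rearrangement bound\<close>

lemma finite_maximizer:
  fixes f :: "'a \<Rightarrow> real"
  assumes "finite A" "A \<noteq> {}"
  obtains a where "a \<in> A" "\<forall>b\<in>A. f b \<le> f a"
proof -
  have "Max (f ` A) \<in> f ` A" using assms by simp
  then obtain a where "a \<in> A" "f a = Max (f ` A)" by auto
  then show ?thesis using that assms by simp
qed

definition doubly_stochastic :: "'a set \<Rightarrow> 'b set \<Rightarrow> ('a \<Rightarrow> 'b \<Rightarrow> real) \<Rightarrow> bool" where
  "doubly_stochastic I J B \<longleftrightarrow> (\<forall>i\<in>I. \<forall>j\<in>J. 0 \<le> B i j)
     \<and> (\<forall>i\<in>I. (\<Sum>j\<in>J. B i j) = 1) \<and> (\<forall>j\<in>J. (\<Sum>i\<in>I. B i j) = 1)"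

text \<open>Deleting row \<open>i\<^sub>0\<close> and column \<open>j\<^sub>0\<close> of a doubly stochastic matrix and
  redistributing their mass (proportionally to the outer product of the deleted row and column)
  gives a doubly stochastic matrix again.  This is the step of the rearrangement argument.\<close>

definition contract :: "('a \<Rightarrow> 'b \<Rightarrow> real) \<Rightarrow> 'a \<Rightarrow> 'b \<Rightarrow> 'a \<Rightarrow> 'b \<Rightarrow> real" where
  "contract B i0 j0 i j = B i j + B i j0 * B i0 j / (1 - B i0 j0)"

text \<open>Margins of the deleted row and column; if the pivot entry is \<open>1\<close> they vanish, which is
  why the division in \<open>contract\<close> (by zero in that case) is harmless.\<close>

lemma doubly_stochastic_deleted:
  assumes ds: "doubly_stochastic I J B" and fin: "finite I" "finite J" and i0: "i0 \<in> I" and j0: "j0 \<in> J"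
  shows "(\<Sum>i\<in>I - {i0}. B i j0) = 1 - B i0 j0" "(\<Sum>j\<in>J - {j0}. B i0 j) = 1 - B i0 j0"
    and "i \<in> I - {i0} \<Longrightarrow> B i j0 * (1 - B i0 j0) / (1 - B i0 j0) = B i j0"
    and "j \<in> J - {j0} \<Longrightarrow> B i0 j * (1 - B i0 j0) / (1 - B i0 j0) = B i0 j"
proof -
  have nn: "\<And>i j. i \<in> I \<Longrightarrow> j \<in> J \<Longrightarrow> 0 \<le> B i j" using ds by (simp add: doubly_stochastic_def)
  show col: "(\<Sum>i\<in>I - {i0}. B i j0) = 1 - B i0 j0"
    using ds j0 sum.remove[OF fin(1) i0, of "\<lambda>i. B i j0"] by (simp add: doubly_stochastic_def)
  show row: "(\<Sum>j\<in>J - {j0}. B i0 j) = 1 - B i0 j0"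
    using ds i0 sum.remove[OF fin(2) j0, of "B i0"] by (simp add: doubly_stochastic_def)
  show "B i j0 * (1 - B i0 j0) / (1 - B i0 j0) = B i j0" if i: "i \<in> I - {i0}"
  proof (cases "B i0 j0 = 1")
    case True
    then show ?thesis using col sum_nonneg_eq_0_iff[of "I - {i0}" "\<lambda>i. B i j0"] fin nn j0 i by auto
  qed simp
  show "B i0 j * (1 - B i0 j0) / (1 - B i0 j0) = B i0 j" if j: "j \<in> J - {j0}"
  proof (cases "B i0 j0 = 1")
    case True
    then show ?thesis using row sum_nonneg_eq_0_iff[of "J - {j0}" "B i0"] fin nn i0 j by auto
  qed simp
qed

lemma doubly_stochastic_contract:
  assumes ds: "doubly_stochastic I J B" and fin: "finite I" "finite J" and i0: "i0 \<in> I" and j0: "j0 \<in> J"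
  shows "doubly_stochastic (I - {i0}) (J - {j0}) (contract B i0 j0)"
proof -
  note del = doubly_stochastic_deleted[OF ds fin i0 j0]
  have nn: "\<And>i j. i \<in> I \<Longrightarrow> j \<in> J \<Longrightarrow> 0 \<le> B i j" using ds by (simp add: doubly_stochastic_def)
  have "0 \<le> 1 - B i0 j0" unfolding del(1)[symmetric] using nn j0 by (intro sum_nonneg) auto
  then have "\<forall>i\<in>I - {i0}. \<forall>j\<in>J - {j0}. 0 \<le> contract B i0 j0 i j"
    using nn i0 j0 by (auto simp: contract_def)
  moreover have "(\<Sum>j\<in>J - {j0}. contract B i0 j0 i j) = 1" if i: "i \<in> I - {i0}" for i
  proof -
    have "(\<Sum>j\<in>J - {j0}. contract B i0 j0 i j)
        = (\<Sum>j\<in>J - {j0}. B i j) + B i j0 * (\<Sum>j\<in>J - {j0}. B i0 j) / (1 - B i0 j0)"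
      by (simp add: contract_def sum.distrib sum_distrib_left sum_divide_distrib)
    also have "\<dots> = 1"
      using ds i sum.remove[OF fin(2) j0, of "B i"] by (simp add: del(2) del(3)[OF i] doubly_stochastic_def)
    finally show ?thesis .
  qed
  moreover have "(\<Sum>i\<in>I - {i0}. contract B i0 j0 i j) = 1" if j: "j \<in> J - {j0}" for j
  proof -
    have "(\<Sum>i\<in>I - {i0}. contract B i0 j0 i j)
        = (\<Sum>i\<in>I - {i0}. B i j) + (\<Sum>i\<in>I - {i0}. B i j0) * B i0 j / (1 - B i0 j0)"
      by (simp add: contract_def sum.distrib sum_distrib_right sum_divide_distrib)
    also have "\<dots> = 1"
      using ds j sum.remove[OF fin(1) i0, of "\<lambda>i. B i j"] del(4)[OF j]
      by (simp add: del(1) doubly_stochastic_def mult.commute)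
    finally show ?thesis .
  qed
  ultimately show ?thesis by (simp add: doubly_stochastic_def)
qed

text \<open>The scalar inequality behind one contraction step: with \<open>s = 1 - B\<^sub>i\<^sub>0\<^sub>j\<^sub>0\<close>, the mass
  \<open>X\<close> (resp. \<open>Y\<close>) removed from the deleted column (resp. row) is dominated by \<open>s\<close> times the
  maximal weight, and then \<open>(s x\<^sub>0 - X)(s y\<^sub>0 - Y)/s \<ge> 0\<close> rearranges to the claim.\<close>

lemma pairing_gain:
  fixes s x0 y0 X Y :: real
  assumes s: "s \<ge> 0" and X: "s * x0 - X \<ge> 0" and Y: "s * y0 - Y \<ge> 0"
    and degenerate: "s = 0 \<Longrightarrow> X = 0 \<and> Y = 0"
  shows "x0 * (1 - s) * y0 + x0 * Y + y0 * X \<le> x0 * y0 + X * Y / s"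
proof (cases "s = 0")
  case True
  then show ?thesis using degenerate by simp
next
  case False
  then have "s > 0" using s by simp
  then have "(s * x0 - X) * (s * y0 - Y) / s \<ge> 0" using X Y by simp
  moreover have "(s * x0 - X) * (s * y0 - Y) / s
      = x0 * y0 + X * Y / s - (x0 * (1 - s) * y0 + x0 * Y + y0 * X)"
    using \<open>s > 0\<close> by (simp add: field_simps)
  ultimately show ?thesis by simp
qed

lemma contract_gain:
  fixes x :: "'a \<Rightarrow> real" and y :: "'b \<Rightarrow> real"
  assumes ds: "doubly_stochastic I J B" and fin: "finite I" "finite J" and i0: "i0 \<in> I" and j0: "j0 \<in> J"
    and x_max: "\<forall>i\<in>I. x i \<le> x i0" and y_max: "\<forall>j\<in>J. y j \<le> y j0"
  shows "(\<Sum>i\<in>I. \<Sum>j\<in>J. x i * B i j * y j)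
      \<le> x i0 * y j0 + (\<Sum>i\<in>I - {i0}. \<Sum>j\<in>J - {j0}. x i * contract B i0 j0 i j * y j)"
proof -
  note del = doubly_stochastic_deleted[OF ds fin i0 j0]
  have nn: "\<And>i j. i \<in> I \<Longrightarrow> j \<in> J \<Longrightarrow> 0 \<le> B i j" using ds by (simp add: doubly_stochastic_def)
  define s where "s = 1 - B i0 j0"
  define X where "X = (\<Sum>i\<in>I - {i0}. x i * B i j0)"
  define Y where "Y = (\<Sum>j\<in>J - {j0}. B i0 j * y j)"
  define S where "S = (\<Sum>i\<in>I - {i0}. \<Sum>j\<in>J - {j0}. x i * B i j * y j)"
  have splitI: "(\<Sum>i\<in>I. g i) = g i0 + (\<Sum>i\<in>I - {i0}. g i)" for g :: "'a \<Rightarrow> real"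
    by (rule sum.remove[OF fin(1) i0])
  have splitJ: "(\<Sum>j\<in>J. h j) = h j0 + (\<Sum>j\<in>J - {j0}. h j)" for h :: "'b \<Rightarrow> real"
    by (rule sum.remove[OF fin(2) j0])
  have lhs: "(\<Sum>i\<in>I. \<Sum>j\<in>J. x i * B i j * y j) = x i0 * (1 - s) * y j0 + x i0 * Y + y j0 * X + S"
    by (simp add: splitI splitJ sum.distrib X_def Y_def S_def s_def sum_distrib_left
        sum_distrib_right algebra_simps)
  have rhs: "(\<Sum>i\<in>I - {i0}. \<Sum>j\<in>J - {j0}. x i * contract B i0 j0 i j * y j) = S + X * Y / s"
    by (simp add: contract_def S_def X_def Y_def s_def algebra_simps sum.distrib sum_distrib_left
        sum_distrib_right sum_divide_distrib) (subst sum.swap, simp)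
  have "s * x i0 - X = (\<Sum>i\<in>I - {i0}. B i j0 * (x i0 - x i))"
    by (simp add: s_def del(1)[symmetric] X_def sum_distrib_left sum_distrib_right sum_subtractf
        algebra_simps)
  then have X0: "s * x i0 - X \<ge> 0" using nn i0 j0 x_max by (auto intro!: sum_nonneg)
  have "s * y j0 - Y = (\<Sum>j\<in>J - {j0}. B i0 j * (y j0 - y j))"
    by (simp add: s_def del(2)[symmetric] Y_def sum_distrib_left sum_distrib_right sum_subtractf
        algebra_simps)
  then have Y0: "s * y j0 - Y \<ge> 0" using nn i0 j0 y_max by (auto intro!: sum_nonneg)
  have s0: "s \<ge> 0" unfolding s_def del(1)[symmetric] using nn j0 by (intro sum_nonneg) auto
  have "X = 0 \<and> Y = 0" if "s = 0"
  proof -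
    have "B i j0 = 0" if "i \<in> I - {i0}" for i using del(3)[OF that] \<open>s = 0\<close> by (simp add: s_def)
    moreover have "B i0 j = 0" if "j \<in> J - {j0}" for j using del(4)[OF that] \<open>s = 0\<close> by (simp add: s_def)
    ultimately show ?thesis by (simp add: X_def Y_def)
  qed
  then show ?thesis unfolding lhs rhs using pairing_gain[OF s0 X0 Y0] by simp
qed

text \<open>This is the real-valued core of the theorem (a weak form of Birkhoff--von Neumann).\<close>

theorem doubly_stochastic_rearrangement:
  fixes x :: "'a \<Rightarrow> real" and y :: "'b \<Rightarrow> real"
  assumes "finite I" "finite J" "card J = card I" "doubly_stochastic I J B"
  shows "\<exists>f. bij_betw f I J \<and> (\<Sum>i\<in>I. \<Sum>j\<in>J. x i * B i j * y j) \<le> (\<Sum>i\<in>I. x i * y (f i))"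
  using assms
proof (induction "card I" arbitrary: I J B)
  case 0
  then have "I = {}" "J = {}" by auto
  then show ?case by (auto simp: bij_betw_def)
next
  case (Suc n)
  then have "I \<noteq> {}" "J \<noteq> {}" by auto
  then obtain i0 j0 where i0: "i0 \<in> I" "\<forall>i\<in>I. x i \<le> x i0" and j0: "j0 \<in> J" "\<forall>j\<in>J. y j \<le> y j0"
    using finite_maximizer[OF Suc.prems(1), of x] finite_maximizer[OF Suc.prems(2), of y] by metis
  have "n = card (I - {i0})" "card (J - {j0}) = card (I - {i0})"
    using Suc.hyps(2) Suc.prems(1-3) i0 j0 by simp_all
  then obtain f where f: "bij_betw f (I - {i0}) (J - {j0})"
    and le: "(\<Sum>i\<in>I - {i0}. \<Sum>j\<in>J - {j0}. x i * contract B i0 j0 i j * y j)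
             \<le> (\<Sum>i\<in>I - {i0}. x i * y (f i))"
    using Suc.hyps(1)[of "I - {i0}" "J - {j0}" "contract B i0 j0"] Suc.prems
      doubly_stochastic_contract[OF Suc.prems(4,1,2) i0(1) j0(1)] by auto
  define g where "g = f(i0 := j0)"
  have "bij_betw g (I - {i0}) (J - {j0})"
    using f unfolding g_def by (rule bij_betw_cong[THEN iffD1, rotated]) auto
  then have "bij_betw g ((I - {i0}) \<union> {i0}) ((J - {j0}) \<union> {g i0})"
    by (intro notIn_Un_bij_betw) (auto simp: g_def)
  moreover have "(I - {i0}) \<union> {i0} = I" "(J - {j0}) \<union> {g i0} = J" using i0 j0 by (auto simp: g_def)
  ultimately have g: "bij_betw g I J" by simp
  have "(\<Sum>i\<in>I. x i * y (g i)) = x i0 * y (g i0) + (\<Sum>i\<in>I - {i0}. x i * y (g i))"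
    by (rule sum.remove[OF Suc.prems(1) i0(1)])
  also have "\<dots> = x i0 * y j0 + (\<Sum>i\<in>I - {i0}. x i * y (f i))"
    by (auto simp: g_def intro!: sum.cong)
  finally have "(\<Sum>i\<in>I. x i * y (g i)) = x i0 * y j0 + (\<Sum>i\<in>I - {i0}. x i * y (f i))" .
  then show ?case
    using g le contract_gain[OF Suc.prems(4,1,2) i0(1) j0(1) i0(2) j0(2)] by (intro exI[of _ g]) auto
qed

definition mix_value :: "nat \<Rightarrow> (nat \<Rightarrow> complex) \<Rightarrow> (nat \<Rightarrow> real) \<Rightarrow> complex mat \<Rightarrow> complex" where
  "mix_value d c p X = (\<Sum>i<d. c i * (\<Sum>j<d. complex_of_real (p j * (cmod (X $$ (i,j)))\<^sup>2)))"

lemma mix_value_perm_mat: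
  assumes perm: "\<sigma> permutes {..<d}"
  shows "mix_value d c p (perm_mat d \<sigma>) = (\<Sum>i<d. c i * complex_of_real (p (inv_into UNIV \<sigma> i)))"
  unfolding mix_value_def
proof (rule sum.cong[OF refl])
  fix i assume i: "i \<in> {..<d}"
  have img: "inv_into UNIV \<sigma> i < d" using permutes_in_image[OF permutes_inv[OF perm]] i by simp
  have "i = \<sigma> j \<longleftrightarrow> j = inv_into UNIV \<sigma> i" for j
    using permutes_inverses[OF perm] by metis
  then have "(\<Sum>j<d. complex_of_real (p j * (cmod (perm_mat d \<sigma> $$ (i,j)))\<^sup>2))
      = (\<Sum>j<d. if j = inv_into UNIV \<sigma> i then complex_of_real (p j) else 0)"
    using i by (intro sum.cong) auto
  also have "\<dots> = complex_of_real (p (inv_into UNIV \<sigma> i))" using img by simp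
  finally show "c i * (\<Sum>j<d. complex_of_real (p j * (cmod (perm_mat d \<sigma> $$ (i,j)))\<^sup>2))
      = c i * complex_of_real (p (inv_into UNIV \<sigma> i))" by simp
qed

definition best_value :: "nat \<Rightarrow> (nat \<Rightarrow> complex) \<Rightarrow> (nat \<Rightarrow> real) \<Rightarrow> real" where
  "best_value d c p = Max {cmod (\<Sum>i<d. c i * complex_of_real (p (\<sigma> i))) | \<sigma>. \<sigma> permutes {..<d}}"

lemma best_value_is_max:
  "is_max {cmod (\<Sum>i<d. c i * complex_of_real (p (\<sigma> i))) | \<sigma>. \<sigma> permutes {..<d}} (best_value d c p)"
proof -
  define S where "S = {cmod (\<Sum>i<d. c i * complex_of_real (p (\<sigma> i))) | \<sigma>. \<sigma> permutes {..<d}}"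
  have "S = (\<lambda>\<sigma>. cmod (\<Sum>i<d. c i * complex_of_real (p (\<sigma> i)))) ` {\<sigma>. \<sigma> permutes {..<d}}"
    by (auto simp: S_def)
  then have "finite S" using finite_permutations[of "{..<d}"] by simp
  moreover have "S \<noteq> {}" unfolding S_def using permutes_id[of "{..<d}"] by blast
  ultimately show ?thesis unfolding is_max_def best_value_def S_def[symmetric] by simp
qed

lemma best_value_attained:
  obtains \<sigma> where "\<sigma> permutes {..<d}" "cmod (\<Sum>i<d. c i * complex_of_real (p (\<sigma> i))) = best_value d c p"
  using best_value_is_max[where d = d and c = c and p = p] unfolding is_max_def by auto

text \<open>After a phase rotation this is the real rearrangement inequality for the
  doubly stochastic matrix \<open>(|X\<^sub>i\<^sub>j|\<^sup>2)\<close>.\<close>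

theorem mix_value_le_best:
  assumes X: "unitary_mat d X"
  shows "cmod (mix_value d c p X) \<le> best_value d c p"
proof -
  define z where "z = mix_value d c p X"
  define \<theta> where "\<theta> = (if z = 0 then 1 else cnj z / complex_of_real (cmod z))"
  have \<theta>z: "\<theta> * z = complex_of_real (cmod z)"
    by (simp add: \<theta>_def cnj_mult_cmod power2_eq_square)
  have \<theta>1: "cmod \<theta> = 1" by (simp add: \<theta>_def norm_divide)
  define x where "x i = Re (\<theta> * c i)" for i
  define B where "B i j = (cmod (X $$ (i,j)))\<^sup>2" for i j
  have ds: "doubly_stochastic {..<d} {..<d} B"
    using unitary_row_norm[OF X] unitary_col_norm[OF X] by (simp add: doubly_stochastic_def B_def)
  have "cmod z = Re (\<theta> * z)" by (simp add: \<theta>z)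
  also have "\<dots> = (\<Sum>i<d. \<Sum>j<d. x i * B i j * p j)"
    by (simp add: z_def mix_value_def x_def B_def sum_distrib_left Re_sum algebra_simps)
  finally have z_eq: "cmod z = (\<Sum>i<d. \<Sum>j<d. x i * B i j * p j)" .
  obtain f where f: "bij_betw f {..<d} {..<d}"
    and le: "(\<Sum>i<d. \<Sum>j<d. x i * B i j * p j) \<le> (\<Sum>i<d. x i * p (f i))"
    using doubly_stochastic_rearrangement[OF _ _ _ ds, of x p] by auto
  define \<sigma> where "\<sigma> i = (if i < d then f i else i)" for i
  have \<sigma>: "\<sigma> permutes {..<d}"
    using f by (intro bij_imp_permutes) (auto simp: \<sigma>_def bij_betw_def inj_on_def image_def)
  have "(\<Sum>i<d. x i * p (f i)) = Re (\<theta> * (\<Sum>i<d. c i * complex_of_real (p (\<sigma> i))))"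
    by (simp add: x_def \<sigma>_def sum_distrib_left Re_sum algebra_simps)
  also have "\<dots> \<le> cmod (\<theta> * (\<Sum>i<d. c i * complex_of_real (p (\<sigma> i))))"
    by (rule complex_Re_le_cmod)
  also have "\<dots> = cmod (\<Sum>i<d. c i * complex_of_real (p (\<sigma> i)))"
    by (simp add: norm_mult \<theta>1)
  also have "\<dots> \<le> best_value d c p"
    using best_value_is_max \<sigma> unfolding is_max_def by blast
  finally show ?thesis using z_eq le by (simp add: z_def)
qed

section \<open>Spectral theorem for unitary matrices\<close>

definition dsum :: "complex \<Rightarrow> complex mat \<Rightarrow> complex mat" where
  "dsum a A = mat (Suc (dim_row A)) (Suc (dim_col A))
     (\<lambda>(i,j). if i = 0 then (if j = 0 then a else 0) else if j = 0 then 0 else A $$ (i - 1, j - 1))"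

definition lower_block :: "complex mat \<Rightarrow> complex mat" where
  "lower_block A = mat (dim_row A - 1) (dim_col A - 1) (\<lambda>(i,j). A $$ (Suc i, Suc j))"

lemma dsum_dims [simp]: "dim_row (dsum a A) = Suc (dim_row A)" "dim_col (dsum a A) = Suc (dim_col A)"
  by (simp_all add: dsum_def)

lemma dsum_carrier [simp]: "A \<in> carrier_mat n m \<Longrightarrow> dsum a A \<in> carrier_mat (Suc n) (Suc m)"
  unfolding carrier_mat_def by simp

lemma dsum_ent [simp]:
  "dsum a A $$ (0,0) = a"
  "j < dim_col A \<Longrightarrow> dsum a A $$ (0, Suc j) = 0"
  "i < dim_row A \<Longrightarrow> dsum a A $$ (Suc i, 0) = 0"
  "i < dim_row A \<Longrightarrow> j < dim_col A \<Longrightarrow> dsum a A $$ (Suc i, Suc j) = A $$ (i,j)"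
  by (simp_all add: dsum_def)

lemma lower_block_dsum [simp]: "lower_block (dsum a A) = A"
  by (rule eq_matI) (simp_all add: lower_block_def)

lemma dsum_mult:
  assumes A: "A \<in> carrier_mat n k" and B: "B \<in> carrier_mat k m"
  shows "dsum a A * dsum b B = dsum (a * b) (A * B)"
proof (rule eq_matI)
  fix i j assume "i < dim_row (dsum (a * b) (A * B))" "j < dim_col (dsum (a * b) (A * B))"
  then have i: "i < Suc n" and j: "j < Suc m" using A B by simp_all
  have "(dsum a A * dsum b B) $$ (i,j) = dsum a A $$ (i,0) * dsum b B $$ (0,j)
      + (\<Sum>l<k. dsum a A $$ (i, Suc l) * dsum b B $$ (Suc l, j))"
    unfolding mult_mat_ent[OF dsum_carrier[OF A] dsum_carrier[OF B] i j]
    by (rule sum.lessThan_Suc_shift)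
  also have "\<dots> = dsum (a * b) (A * B) $$ (i,j)"
    using A B i j by (cases i; cases j) (simp_all add: mult_mat_ent[OF A B] del: index_mult_mat(1))
  finally show "(dsum a A * dsum b B) $$ (i,j) = dsum (a * b) (A * B) $$ (i,j)" .
qed (use A B in simp_all)

lemma adj_dsum: "adj (dsum a A) = dsum (cnj a) (adj A)"
proof (rule eq_matI)
  fix i j assume "i < dim_row (dsum (cnj a) (adj A))" "j < dim_col (dsum (cnj a) (adj A))"
  then show "adj (dsum a A) $$ (i,j) = dsum (cnj a) (adj A) $$ (i,j)"
    by (cases i; cases j) simp_all
qed simp_all

lemma dsum_one: "dsum 1 (1\<^sub>m n) = 1\<^sub>m (Suc n)"
proof (rule eq_matI)
  fix i j assume "i < dim_row (1\<^sub>m (Suc n))" "j < dim_col (1\<^sub>m (Suc n))"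
  then show "dsum 1 (1\<^sub>m n) $$ (i,j) = 1\<^sub>m (Suc n) $$ (i,j)"
    by (cases i; cases j) simp_all
qed simp_all

lemma diagm_Suc: "diagm (Suc n) f = dsum (f 0) (diagm n (\<lambda>i. f (Suc i)))"
proof (rule eq_matI)
  fix i j assume "i < dim_row (dsum (f 0) (diagm n (\<lambda>i. f (Suc i))))"
    "j < dim_col (dsum (f 0) (diagm n (\<lambda>i. f (Suc i))))"
  then show "diagm (Suc n) f $$ (i,j) = dsum (f 0) (diagm n (\<lambda>i. f (Suc i))) $$ (i,j)"
    by (cases i; cases j) (simp_all add: diagm_def)
qed (simp_all add: diagm_def)

lemma unitary_dsum:
  assumes R: "unitary_mat n R" and a: "cmod a = 1"
  shows "unitary_mat (Suc n) (dsum a R)"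
proof -
  have Rc: "R \<in> carrier_mat n n" using R by (simp add: unitary_mat_def)
  have "cnj a * a = 1" "a * cnj a = 1" using a by (simp_all add: cnj_mult_cmod mult_cnj_cmod)
  then show ?thesis
    using R Rc unfolding unitary_mat_def
    by (simp add: adj_dsum dsum_mult[OF adj_carrier[OF Rc] Rc] dsum_mult[OF Rc adj_carrier[OF Rc]]
        dsum_one)
qed

lemma dsum_conj_diagm:
  assumes R: "R \<in> carrier_mat m m"
  shows "dsum e (R * diagm m \<nu> * adj R)
       = dsum 1 R * diagm (Suc m) (\<lambda>k. if k = 0 then e else \<nu> (k - 1)) * adj (dsum 1 R)"
proof -
  have "dsum e (R * diagm m \<nu> * adj R) = dsum 1 R * dsum e (diagm m \<nu>) * dsum 1 (adj R)"
    by (simp add: dsum_mult[OF R diagm_carrier]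
        dsum_mult[OF mult_carrier_mat[OF R diagm_carrier] adj_carrier[OF R]])
  then show ?thesis by (simp add: diagm_Suc adj_dsum)
qed

lemma unitary_deflate:
  assumes A: "unitary_mat (Suc m) A" and col: "\<forall>i<Suc m. A $$ (i,0) = (if i = 0 then e else 0)"
  shows "A = dsum e (lower_block A)" and "unitary_mat m (lower_block A)"
proof -
  have Ac: "A \<in> carrier_mat (Suc m) (Suc m)" using A by (simp add: unitary_mat_def)
  have "(\<Sum>i<Suc m. (cmod (A $$ (i,0)))\<^sup>2) = 1" by (rule unitary_col_norm[OF A]) simp
  then have e: "(cmod e)\<^sup>2 = 1" using col by (simp add: sum.lessThan_Suc_shift del: sum.lessThan_Suc)
  have "(\<Sum>j<Suc m. (cmod (A $$ (0,j)))\<^sup>2) = 1" by (rule unitary_row_norm[OF A]) simp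
  then have "(\<Sum>k<m. (cmod (A $$ (0, Suc k)))\<^sup>2) = 0" using col e by (simp add: sum.lessThan_Suc_shift del: sum.lessThan_Suc)
  then have row: "A $$ (0, Suc k) = 0" if "k < m" for k
    using sum_nonneg_eq_0_iff[of "{..<m}" "\<lambda>k. (cmod (A $$ (0, Suc k)))\<^sup>2"] that by simp
  show decomp: "A = dsum e (lower_block A)"
  proof (rule eq_matI)
    fix i j assume "i < dim_row (dsum e (lower_block A))" "j < dim_col (dsum e (lower_block A))"
    then have "i < Suc m" "j < Suc m" using Ac by (simp_all add: lower_block_def)
    then show "A $$ (i,j) = dsum e (lower_block A) $$ (i,j)"
      using Ac col row by (cases i; cases j) (simp_all add: lower_block_def)
  qed (use Ac in \<open>simp_all add: lower_block_def\<close>)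
  define L where "L = lower_block A"
  have "dim_row A = Suc m" "dim_col A = Suc m" using Ac by auto
  then have Lc: "L \<in> carrier_mat m m" by (simp add: L_def lower_block_def)
  have "dsum (cnj e * e) (adj L * L) = 1\<^sub>m (Suc m)" "dsum (e * cnj e) (L * adj L) = 1\<^sub>m (Suc m)"
    using A decomp unfolding unitary_mat_def L_def[symmetric]
    by (metis adj_dsum dsum_mult[OF adj_carrier[OF Lc] Lc] dsum_mult[OF Lc adj_carrier[OF Lc]])+
  then have "adj L * L = 1\<^sub>m m" "L * adj L = 1\<^sub>m m"
    by (metis dsum_one lower_block_dsum)+
  then show "unitary_mat m (lower_block A)" using Lc by (simp add: unitary_mat_def L_def)
qed

lemma eigenvector_exists:
  fixes W :: "complex mat"
  assumes W: "W \<in> carrier_mat n n" and n: "0 < n"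
  shows "\<exists>e v. v \<in> carrier_vec n \<and> v \<noteq> 0\<^sub>v n \<and> W *\<^sub>v v = e \<cdot>\<^sub>v v"
proof -
  have "degree (char_poly W) > 0" using degree_monic_char_poly[OF W] n by auto
  then have "\<not> constant (poly (char_poly W))" by (simp add: constant_degree)
  then obtain e where "poly (char_poly W) e = 0"
    using fundamental_theorem_of_algebra by blast
  then have "eigenvalue W e" using eigenvalue_root_char_poly[OF W] by simp
  then show ?thesis using W unfolding eigenvalue_def eigenvector_def by auto
qed

lemma unit_eigenvector:
  assumes W: "W \<in> carrier_mat n n" and n: "0 < n"
  shows "\<exists>e u. (\<Sum>i<n. (cmod (u i))\<^sup>2) = 1 \<and> Im (u 0) = 0 \<and> Re (u 0) \<ge> 0 \<and>
     (\<forall>i<n. (\<Sum>j<n. W $$ (i,j) * u j) = e * u i)"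
proof -
  obtain e v where v: "v \<in> carrier_vec n" and v0: "v \<noteq> 0\<^sub>v n" and Wv: "W *\<^sub>v v = e \<cdot>\<^sub>v v"
    using eigenvector_exists[OF W n] by blast
  have eig: "(\<Sum>j<n. W $$ (i,j) * v $ j) = e * v $ i" if i: "i < n" for i
  proof -
    have "(W *\<^sub>v v) $ i = (e \<cdot>\<^sub>v v) $ i" using Wv by simp
    then show ?thesis using W v i by (simp add: scalar_prod_def atLeast0LessThan)
  qed
  obtain i0 where i0: "i0 < n" "v $ i0 \<noteq> 0"
    using v v0 by (metis carrier_vecD eq_vecI index_zero_vec(1,2))
  define N where "N = sqrt (\<Sum>i<n. (cmod (v $ i))\<^sup>2)"
  have "(\<Sum>i<n. (cmod (v $ i))\<^sup>2) > 0"
    by (rule sum_pos2[of "{..<n}" i0]) (use i0 in auto)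
  then have Np: "N > 0" and NS: "N\<^sup>2 = (\<Sum>i<n. (cmod (v $ i))\<^sup>2)" by (simp_all add: N_def)
  define ph where "ph = (if v $ 0 = 0 then 1 else cnj (v $ 0) / complex_of_real (cmod (v $ 0)))"
  have ph1: "cmod ph = 1" by (simp add: ph_def norm_divide)
  define u where "u i = ph * v $ i / complex_of_real N" for i
  have "(\<Sum>i<n. (cmod (u i))\<^sup>2) = (\<Sum>i<n. (cmod (v $ i))\<^sup>2) / N\<^sup>2"
    using Np by (simp add: u_def norm_divide norm_mult ph1 power_divide sum_divide_distrib)
  then have unit: "(\<Sum>i<n. (cmod (u i))\<^sup>2) = 1" using Np by (simp flip: NS)
  have "ph * v $ 0 = complex_of_real (cmod (v $ 0))"
    by (cases "v $ 0 = 0") (simp_all add: ph_def cnj_mult_cmod power2_eq_square)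
  then have u0: "u 0 = complex_of_real (cmod (v $ 0) / N)" by (simp add: u_def)
  have "(\<Sum>j<n. W $$ (i,j) * u j) = e * u i" if i: "i < n" for i
  proof -
    have "(\<Sum>j<n. W $$ (i,j) * u j) = ph / complex_of_real N * (\<Sum>j<n. W $$ (i,j) * v $ j)"
      by (simp add: u_def sum_distrib_left algebra_simps)
    then show ?thesis using eig[OF i] by (simp add: u_def algebra_simps)
  qed
  moreover have "Im (u 0) = 0" "Re (u 0) \<ge> 0" using Np by (simp_all add: u0)
  ultimately show ?thesis using unit by blast
qed

definition reflection :: "nat \<Rightarrow> (nat \<Rightarrow> complex) \<Rightarrow> complex mat" where
  "reflection n w = mat n n (\<lambda>(i,j). (if i = j then 1 else 0)
      - complex_of_real (2 / (\<Sum>k<n. (cmod (w k))\<^sup>2)) * w i * cnj (w j))"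

lemma sum_indicator_mult:
  fixes f :: "nat \<Rightarrow> complex"
  assumes "i < n"
  shows "(\<Sum>k<n. (if i = k then 1 else 0) * f k) = f i"
    and "(\<Sum>k<n. f k * (if k = i then 1 else 0)) = f i"
  using assms by (simp_all add: if_distrib[of "\<lambda>x. x * _"] if_distrib[of "\<lambda>x. _ * x"] cong: if_cong)

lemma unitary_reflection:
  assumes N: "(\<Sum>k<n. (cmod (w k))\<^sup>2) \<noteq> 0"
  shows "unitary_mat n (reflection n w)"
proof -
  define S where "S = (\<Sum>k<n. (cmod (w k))\<^sup>2)"
  define c where "c = complex_of_real (2 / S)"
  have sum_w: "(\<Sum>k<n. w k * cnj (w k)) = complex_of_real S" by (simp add: S_def mult_cnj_cmod)
  have "2 / S * (2 / S) * S = 2 * (2 / S)" using N by (simp add: S_def field_simps)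
  then have cN: "c * c * (\<Sum>k<n. w k * cnj (w k)) = 2 * c"
    unfolding sum_w c_def by (metis of_real_mult of_real_numeral)
  define H where "H = reflection n w"
  have Hc: "H \<in> carrier_mat n n" by (simp add: H_def reflection_def)
  have Hent: "H $$ (i,j) = (if i = j then 1 else 0) - c * w i * cnj (w j)" if "i < n" "j < n" for i j
    using that by (simp add: H_def reflection_def c_def S_def)
  have adjH: "adj H = H"
    by (rule eq_matI) (use Hc in \<open>auto simp: Hent c_def\<close>)
  have HH: "H * H = 1\<^sub>m n"
  proof (rule eq_matI)
    fix i j assume "i < dim_row (1\<^sub>m n)" "j < dim_col (1\<^sub>m n)"
    then have i: "i < n" and j: "j < n" by auto
    have "(H * H) $$ (i,j) = (\<Sum>k<n. ((if i = k then 1 else 0) - c * w i * cnj (w k))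
           * ((if k = j then 1 else 0) - c * w k * cnj (w j)))"
      using i j by (simp add: mult_mat_ent[OF Hc Hc i j] Hent del: index_mult_mat)
    also have "\<dots> = (\<Sum>k<n. (if i = k then 1 else 0) * (if k = j then 1 else 0))
          - (\<Sum>k<n. (if i = k then 1 else 0) * (c * w k * cnj (w j)))
          - (\<Sum>k<n. c * w i * cnj (w k) * (if k = j then 1 else 0))
          + c * c * w i * cnj (w j) * (\<Sum>k<n. w k * cnj (w k))"
      by (simp add: algebra_simps sum.distrib sum_subtractf sum_distrib_left)
    also have "\<dots> = (if i = j then 1 else 0) - 2 * c * w i * cnj (w j)
          + c * c * (\<Sum>k<n. w k * cnj (w k)) * w i * cnj (w j)"
      using i j by (simp add: sum_indicator_mult)
    also have "\<dots> = 1\<^sub>m n $$ (i,j)" using i j cN by simp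
    finally show "(H * H) $$ (i,j) = 1\<^sub>m n $$ (i,j)" .
  qed (simp_all add: H_def reflection_def)
  show ?thesis using Hc adjH HH by (simp add: unitary_mat_def H_def)
qed

text \<open>A unit vector whose first coordinate is real and non-negative is the first column of
  some unitary matrix (the identity, or a Householder reflection).\<close>

lemma unitary_with_first_col:
  assumes u: "(\<Sum>i<Suc m. (cmod (u i))\<^sup>2) = 1" and u0: "Im (u 0) = 0" "Re (u 0) \<ge> 0"
  shows "\<exists>H. unitary_mat (Suc m) H \<and> (\<forall>i<Suc m. H $$ (i,0) = u i)"
proof -
  define r where "r = Re (u 0)"
  have ur: "u 0 = complex_of_real r" using u0 by (simp add: r_def complex_eq_iff)
  have rest: "r\<^sup>2 + (\<Sum>k<m. (cmod (u (Suc k)))\<^sup>2) = 1"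
    using u by (simp add: sum.lessThan_Suc_shift ur del: sum.lessThan_Suc)
  have rest_nn: "(\<Sum>k<m. (cmod (u (Suc k)))\<^sup>2) \<ge> 0" by (rule sum_nonneg) simp
  show ?thesis
  proof (cases "r = 1")
    case True
    then have "(\<Sum>k<m. (cmod (u (Suc k)))\<^sup>2) = 0" using rest by simp
    then have "u (Suc k) = 0" if "k < m" for k
      using sum_nonneg_eq_0_iff[of "{..<m}" "\<lambda>k. (cmod (u (Suc k)))\<^sup>2"] that by simp
    then have "\<forall>i<Suc m. 1\<^sub>m (Suc m) $$ (i,0) = u i"
      using True ur by (auto simp: less_Suc_eq_0_disj)
    then show ?thesis using unitary_one by blast
  next
    case False
    have "r\<^sup>2 \<le> 1" using rest rest_nn by linarith
    then have r1: "r < 1" using False by (meson abs_le_D1 abs_square_le_1 order_le_neq_trans)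
    define w where "w i = (if i = 0 then 1 else 0) - u i" for i
    have "cmod (1 - complex_of_real r) = \<bar>1 - r\<bar>"
      by (metis norm_of_real of_real_1 of_real_diff)
    then have "(\<Sum>k<Suc m. (cmod (w k))\<^sup>2) = (1 - r)\<^sup>2 + (\<Sum>k<m. (cmod (u (Suc k)))\<^sup>2)"
      by (simp add: sum.lessThan_Suc_shift w_def ur norm_minus_commute del: sum.lessThan_Suc)
    also have "\<dots> = 2 - 2 * r" using rest by (simp add: power2_eq_square algebra_simps)
    finally have N: "(\<Sum>k<Suc m. (cmod (w k))\<^sup>2) = 2 - 2 * r" .
    have "unitary_mat (Suc m) (reflection (Suc m) w)"
      by (rule unitary_reflection) (use N r1 in simp)
    moreover have "reflection (Suc m) w $$ (i,0) = u i" if "i < Suc m" for i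
    proof -
      have "2 / (2 - 2 * r) * (1 - r) = 1" using r1 by (simp add: field_simps)
      then have "complex_of_real (2 / (2 - 2 * r)) * complex_of_real (1 - r) = 1"
        by (metis of_real_mult of_real_1)
      moreover have "cnj (w 0) = complex_of_real (1 - r)" by (simp add: w_def ur)
      ultimately have c: "complex_of_real (2 / (2 - 2 * r)) * cnj (w 0) = 1" by simp
      have "reflection (Suc m) w $$ (i,0)
          = (if i = 0 then 1 else 0) - complex_of_real (2 / (2 - 2 * r)) * w i * cnj (w 0)"
        using that unfolding reflection_def N by simp
      also have "\<dots> = (if i = 0 then 1 else 0) - w i * (complex_of_real (2 / (2 - 2 * r)) * cnj (w 0))"
        by (simp only: mult_ac)
      also have "\<dots> = (if i = 0 then 1 else 0) - w i"
        by (simp only: c mult_1_right)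
      finally show ?thesis by (simp add: w_def)
    qed
    ultimately show ?thesis by blast
  qed
qed

lemma conj_first_col_eigen:
  assumes H: "unitary_mat n H" and W: "W \<in> carrier_mat n n" and i: "i < n"
    and eig: "\<forall>k<n. (\<Sum>j<n. W $$ (k,j) * H $$ (j,0)) = e * H $$ (k,0)"
  shows "(adj H * W * H) $$ (i,0) = (if i = 0 then e else 0)"
proof -
  have Hc: "H \<in> carrier_mat n n" and H1: "adj H * H = 1\<^sub>m n" using H by (simp_all add: unitary_mat_def)
  have n: "0 < n" using i by simp
  have WH: "(W * H) $$ (k,0) = e * H $$ (k,0)" if "k < n" for k
    using that eig n by (simp add: mult_mat_ent[OF W Hc] del: index_mult_mat)
  have "(adj H * W * H) $$ (i,0) = (adj H * (W * H)) $$ (i,0)"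
    using assoc_mult_mat[OF adj_carrier[OF Hc] W Hc] by simp
  also have "\<dots> = e * (adj H * H) $$ (i,0)"
    using i n Hc by (simp add: mult_mat_ent[OF adj_carrier[OF Hc] mult_carrier_mat[OF W Hc]]
        mult_mat_ent[OF adj_carrier[OF Hc] Hc] WH sum_distrib_left algebra_simps del: index_mult_mat)
  finally show ?thesis using H1 i by simp
qed

text \<open>Spectral theorem for unitary matrices: every unitary matrix is unitarily diagonalisable.
  Induction on the size, deflating along a unit eigenvector.\<close>

theorem unitary_diagonalizable:
  "unitary_mat n W \<Longrightarrow> \<exists>R \<nu>. unitary_mat n R \<and> W = R * diagm n \<nu> * adj R"
proof (induction n arbitrary: W)
  case 0
  then have "W = 1\<^sub>m 0 * diagm 0 (\<lambda>_. 0) * adj (1\<^sub>m 0)"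
    by (intro eq_matI) (auto simp: unitary_mat_def)
  then show ?case using unitary_one by blast
next
  case (Suc m)
  have Wc: "W \<in> carrier_mat (Suc m) (Suc m)" using Suc.prems by (simp add: unitary_mat_def)
  obtain e u where unit: "(\<Sum>i<Suc m. (cmod (u i))\<^sup>2) = 1" and u0: "Im (u 0) = 0" "Re (u 0) \<ge> 0"
    and eig: "\<forall>i<Suc m. (\<Sum>j<Suc m. W $$ (i,j) * u j) = e * u i"
    using unit_eigenvector[OF Wc] by auto
  obtain H where H: "unitary_mat (Suc m) H" and Hcol: "\<forall>i<Suc m. H $$ (i,0) = u i"
    using unitary_with_first_col[OF unit u0] by blast
  have Hc: "H \<in> carrier_mat (Suc m) (Suc m)" using H by (simp add: unitary_mat_def)
  define A where "A = adj H * W * H"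
  have A: "unitary_mat (Suc m) A"
    unfolding A_def by (rule unitary_mult[OF unitary_mult[OF unitary_adj[OF H] Suc.prems] H])
  have "\<forall>k<Suc m. (\<Sum>j<Suc m. W $$ (k,j) * H $$ (j,0)) = e * H $$ (k,0)"
    using eig Hcol by simp
  then have "\<forall>i<Suc m. A $$ (i,0) = (if i = 0 then e else 0)"
    unfolding A_def using conj_first_col_eigen[OF H Wc] by blast
  then have A_split: "A = dsum e (lower_block A)" and L: "unitary_mat m (lower_block A)"
    using unitary_deflate[OF A] by blast+
  obtain R \<nu> where R: "unitary_mat m R" and L_diag: "lower_block A = R * diagm m \<nu> * adj R"
    using Suc.IH[OF L] by blast
  define R' where "R' = dsum 1 R"
  define \<nu>' where "\<nu>' k = (if k = 0 then e else \<nu> (k - 1))" for k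
  have R': "unitary_mat (Suc m) R'" unfolding R'_def by (rule unitary_dsum[OF R]) simp
  have A_diag: "A = R' * diagm (Suc m) \<nu>' * adj R'"
    using A_split unfolding L_diag R'_def \<nu>'_def dsum_conj_diagm[OF unitary_carrier[OF R]] .
  have "W = H * A * adj H"
    using conj_cancel[OF unitary_adj[OF H] Wc] by (simp add: A_def)
  then have "W = (H * R') * diagm (Suc m) \<nu>' * adj (H * R')"
    unfolding A_diag using conj_conj[OF Hc _ diagm_carrier] R' by (simp add: unitary_mat_def)
  then show ?case using unitary_mult[OF H R'] by blast
qed

lemma char_poly_conj_diagm:
  assumes R: "unitary_mat n R"
  shows "char_poly (R * diagm n \<nu> * adj R) = (\<Prod>i<n. [:- \<nu> i, 1:])"
proof -
  have Rc: "R \<in> carrier_mat n n" and "adj R * R = 1\<^sub>m n" "R * adj R = 1\<^sub>m n"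
    using R by (auto simp: unitary_mat_def)
  then have "similar_mat_wit (R * diagm n \<nu> * adj R) (diagm n \<nu>) R (adj R)"
    unfolding similar_mat_wit_def Let_def by auto
  then have "char_poly (R * diagm n \<nu> * adj R) = char_poly (diagm n \<nu>)"
    by (intro char_poly_similar) (auto simp: similar_mat_def)
  also have "\<dots> = (\<Prod>a\<leftarrow>diag_mat (diagm n \<nu>). [:- a, 1:])"
    by (rule char_poly_upper_triangular[OF diagm_carrier]) (simp add: upper_triangular_def diagm_def)
  also have "diag_mat (diagm n \<nu>) = map \<nu> [0..<n]"
    by (simp add: diag_mat_def diagm_def)
  finally show ?thesis by (simp add: prod.list_conv_set_nth atLeast0LessThan)
qed

text \<open>A product of linear factors determines its roots with multiplicity, so two such
  products agree only if the root sequences differ by a permutation.\<close>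

lemma order_prod_linear:
  fixes a :: "'x \<Rightarrow> complex"
  assumes "finite S"
  shows "order c (\<Prod>i\<in>S. [:- a i, 1:]) = count (image_mset a (mset_set S)) c"
  using assms
proof (induction S rule: finite_induct)
  case empty
  then show ?case by (simp add: order_0I)
next
  case (insert x F)
  have nz: "(\<Prod>i\<in>F. [:- a i, 1:]) \<noteq> 0" using insert(1) by (simp add: prod_zero_iff)
  have lin: "order c [:- a x, 1:] = (if a x = c then 1 else 0)"
    using order_power_n_n[of c 1] by (auto intro: order_0I)
  have "order c (\<Prod>i\<in>insert x F. [:- a i, 1:]) = order c ([:- a x, 1:] * (\<Prod>i\<in>F. [:- a i, 1:]))"
    using insert by simp
  also have "\<dots> = order c [:- a x, 1:] + order c (\<Prod>i\<in>F. [:- a i, 1:])"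
    by (rule order_mult, rule no_zero_divisors) (use nz in simp_all)
  finally show ?case using insert lin by simp
qed

lemma prod_linear_eq_perm:
  fixes a b :: "nat \<Rightarrow> complex"
  assumes "(\<Prod>i<n. [:- a i, 1:]) = (\<Prod>i<n. [:- b i, 1:])"
  shows "\<exists>\<tau>. \<tau> permutes {..<n} \<and> (\<forall>i<n. a i = b (\<tau> i))"
proof -
  have "image_mset a (mset_set {..<n}) = image_mset b (mset_set {..<n})"
    using order_prod_linear[of "{..<n}" _ a] order_prod_linear[of "{..<n}" _ b] assms
    by (intro multiset_eqI) simp
  then obtain \<tau> where "\<tau> permutes {..<n}" "\<forall>x\<in>{..<n}. a x = b (\<tau> x)"
    by (rule image_mset_eq_implies_permutes[rotated]) auto
  then show ?thesis by auto
qed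

text \<open>This uses the spectral theorem and the uniqueness of roots.\<close>

lemma W_set_iff:
  assumes lam: "\<forall>i<d. cmod (lam i) = 1"
  shows "W \<in> W_set d lam \<longleftrightarrow> (\<exists>R. unitary_mat d R \<and> W = R * diagm d lam * adj R)"
proof
  assume "W \<in> W_set d lam"
  then have W: "unitary_mat d W" and cp: "char_poly W = (\<Prod>i<d. [:- lam i, 1:])"
    by (auto simp: W_set_def)
  obtain R \<nu> where R: "unitary_mat d R" and W_diag: "W = R * diagm d \<nu> * adj R"
    using unitary_diagonalizable[OF W] by blast
  have "(\<Prod>i<d. [:- \<nu> i, 1:]) = (\<Prod>i<d. [:- lam i, 1:])"
    using char_poly_conj_diagm[OF R] cp W_diag by simp
  then obtain \<tau> where \<tau>: "\<tau> permutes {..<d}" and \<nu>: "\<forall>i<d. \<nu> i = lam (\<tau> i)"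
    using prod_linear_eq_perm by blast
  define P where "P = perm_mat d (inv_into UNIV \<tau>)"
  have P: "unitary_mat d P" unfolding P_def by (rule unitary_perm_mat[OF permutes_inv[OF \<tau>]])
  have "diagm d \<nu> = P * diagm d lam * adj P"
    unfolding P_def perm_mat_conj_diagm[OF permutes_inv[OF \<tau>]] permutes_inv_inv[OF \<tau>]
    using \<nu> by (intro eq_matI) (auto simp: diagm_def)
  then have "W = R * (P * diagm d lam * adj P) * adj R" using W_diag by simp
  also have "\<dots> = (R * P) * diagm d lam * adj (R * P)"
    using R P by (intro conj_conj[OF _ _ diagm_carrier]) (simp_all add: unitary_mat_def)
  finally have "W = (R * P) * diagm d lam * adj (R * P)" .
  then show "\<exists>R. unitary_mat d R \<and> W = R * diagm d lam * adj R"
    using unitary_mult[OF R P] by blast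
next
  assume "\<exists>R. unitary_mat d R \<and> W = R * diagm d lam * adj R"
  then obtain R where R: "unitary_mat d R" and W: "W = R * diagm d lam * adj R" by blast
  have "unitary_mat d W"
    unfolding W by (rule unitary_mult[OF unitary_mult[OF R unitary_diagm[OF lam]] unitary_adj[OF R]])
  then show "W \<in> W_set d lam"
    unfolding W_set_def using char_poly_conj_diagm[OF R] W by simp
qed

section \<open>The optimal fidelity\<close>

lemma sum_swap_pairs:
  "(\<Sum>a\<in>A. \<Sum>b\<in>B. \<Sum>k\<in>C. \<Sum>l\<in>D. F a b k l) = (\<Sum>k\<in>C. \<Sum>l\<in>D. \<Sum>a\<in>A. \<Sum>b\<in>B. F a b k l)"
proof -
  have "(\<Sum>a\<in>A. \<Sum>b\<in>B. \<Sum>k\<in>C. \<Sum>l\<in>D. F a b k l) = (\<Sum>a\<in>A. \<Sum>k\<in>C. \<Sum>b\<in>B. \<Sum>l\<in>D. F a b k l)"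
    by (rule sum.cong[OF refl], rule sum.swap)
  also have "\<dots> = (\<Sum>a\<in>A. \<Sum>k\<in>C. \<Sum>l\<in>D. \<Sum>b\<in>B. F a b k l)"
    by (rule sum.cong[OF refl], rule sum.cong[OF refl], rule sum.swap)
  also have "\<dots> = (\<Sum>k\<in>C. \<Sum>a\<in>A. \<Sum>l\<in>D. \<Sum>b\<in>B. F a b k l)"
    by (rule sum.swap)
  also have "\<dots> = (\<Sum>k\<in>C. \<Sum>l\<in>D. \<Sum>a\<in>A. \<Sum>b\<in>B. F a b k l)"
    by (rule sum.cong[OF refl], rule sum.swap)
  finally show ?thesis .
qed

lemma tr_mult:
  assumes A: "A \<in> carrier_mat d d" and B: "B \<in> carrier_mat d d"
  shows "tr (A * B) = (\<Sum>a<d. \<Sum>a'<d. A $$ (a,a') * B $$ (a',a))"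
proof -
  have "dim_row (A * B) = d" using A by simp
  then show ?thesis
    unfolding tr_def using A B by (auto simp: mult_mat_ent[OF A B] simp del: index_mult_mat
        intro!: sum.cong)
qed

lemma expval_tr:
  assumes W: "W \<in> carrier_mat d d"
  shows "expval d dB psi W = tr (W * red_state d dB psi)"
proof -
  have rho: "red_state d dB psi \<in> carrier_mat d d" by (simp add: red_state_def)
  show ?thesis
    unfolding tr_mult[OF W rho] expval_def
    by (auto simp: red_state_def sum_distrib_left algebra_simps intro!: sum.cong)
qed

lemma tr_conj_diagm:
  assumes R: "R \<in> carrier_mat d d" and Q: "Q \<in> carrier_mat d d"
  shows "tr ((R * diagm d c * adj R) * (Q * diagm d (\<lambda>i. complex_of_real (p i)) * adj Q))
       = mix_value d c p (adj R * Q)"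
proof -
  define F where "F a a' k l = c k * complex_of_real (p l)
      * (R $$ (a,k) * cnj (Q $$ (a,l)) * (cnj (R $$ (a',k)) * Q $$ (a',l)))" for a a' k l
  have "tr ((R * diagm d c * adj R) * (Q * diagm d (\<lambda>i. complex_of_real (p i)) * adj Q))
      = (\<Sum>a<d. \<Sum>a'<d. \<Sum>k<d. \<Sum>l<d. F a a' k l)"
    unfolding tr_mult[OF mult_carrier_mat[OF mult_carrier_mat[OF R diagm_carrier] adj_carrier[OF R]]
        mult_carrier_mat[OF mult_carrier_mat[OF Q diagm_carrier] adj_carrier[OF Q]]]
    by (intro sum.cong refl) (simp add: conj_diagm_ent[OF R] conj_diagm_ent[OF Q] sum_product
        F_def algebra_simps)
  also have "\<dots> = (\<Sum>k<d. \<Sum>l<d. \<Sum>a<d. \<Sum>a'<d. F a a' k l)"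
    by (rule sum_swap_pairs)
  also have "\<dots> = mix_value d c p (adj R * Q)"
    unfolding mix_value_def
  proof (intro sum.cong refl, unfold sum_distrib_left, intro sum.cong refl)
    fix k l assume k: "k \<in> {..<d}" and l: "l \<in> {..<d}"
    have X: "(adj R * Q) $$ (k,l) = (\<Sum>a'<d. cnj (R $$ (a',k)) * Q $$ (a',l))"
      using R Q k l by (simp add: mult_mat_ent[OF adj_carrier[OF R] Q] del: index_mult_mat)
    have "complex_of_real (p l * (cmod ((adj R * Q) $$ (k,l)))\<^sup>2)
        = complex_of_real (p l) * (cnj ((adj R * Q) $$ (k,l)) * (adj R * Q) $$ (k,l))"
      by (simp add: cnj_mult_cmod)
    then show "(\<Sum>a<d. \<Sum>a'<d. F a a' k l) = c k * complex_of_real (p l * (cmod ((adj R * Q) $$ (k,l)))\<^sup>2)"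
      unfolding X by (simp add: F_def cnj_sum sum_product sum_distrib_left algebra_simps)
  qed
  finally show ?thesis .
qed

lemma tr_orbit:
  assumes Q: "unitary_mat d Q" and U: "U \<in> carrier_mat d d"
    and eig: "red_state d dB psi = Q * diagm d (\<lambda>i. complex_of_real (p i)) * adj Q"
  shows "tr (U * (Q * diagm d lam * adj Q) * adj U * red_state d dB psi)
       = mix_value d lam p (adj Q * adj U * Q)"
proof -
  have Qc: "Q \<in> carrier_mat d d" using Q by (simp add: unitary_mat_def)
  have "tr (U * (Q * diagm d lam * adj Q) * adj U * red_state d dB psi)
      = tr ((U * Q) * diagm d lam * adj (U * Q) * red_state d dB psi)"
    by (simp only: conj_conj[OF U Qc diagm_carrier])
  also have "\<dots> = mix_value d lam p (adj (U * Q) * Q)"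
    unfolding eig by (rule tr_conj_diagm[OF mult_carrier_mat[OF U Qc] Qc])
  finally show ?thesis by (simp add: adj_mult[OF U Qc])
qed

lemma mix_value_transported_perm:
  assumes Q: "unitary_mat d Q" and \<sigma>: "\<sigma> permutes {..<d}"
  shows "mix_value d c p (adj Q * (Q * perm_mat d \<sigma> * adj Q) * Q)
           = (\<Sum>i<d. c i * complex_of_real (p (inv_into UNIV \<sigma> i)))"
    and "mix_value d c p (adj Q * adj (Q * perm_mat d \<sigma> * adj Q) * Q)
           = (\<Sum>i<d. c i * complex_of_real (p (\<sigma> i)))"
proof -
  have Qc: "Q \<in> carrier_mat d d" using Q by (simp add: unitary_mat_def)
  show "mix_value d c p (adj Q * (Q * perm_mat d \<sigma> * adj Q) * Q)
      = (\<Sum>i<d. c i * complex_of_real (p (inv_into UNIV \<sigma> i)))"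
    by (simp add: conj_cancel[OF Q perm_mat_carrier] mix_value_perm_mat[OF \<sigma>])
  have "adj (Q * perm_mat d \<sigma> * adj Q) = Q * (adj (perm_mat d \<sigma>) * adj Q)"
    by (simp add: adj_mult[OF mult_carrier_mat[OF Qc perm_mat_carrier] adj_carrier[OF Qc]]
        adj_mult[OF Qc perm_mat_carrier])
  also have "\<dots> = Q * perm_mat d (inv_into UNIV \<sigma>) * adj Q"
    by (simp add: adj_perm_mat[OF \<sigma>] assoc_mult_mat[OF Qc perm_mat_carrier adj_carrier[OF Qc]])
  finally have "adj (Q * perm_mat d \<sigma> * adj Q) = Q * perm_mat d (inv_into UNIV \<sigma>) * adj Q" .
  then show "mix_value d c p (adj Q * adj (Q * perm_mat d \<sigma> * adj Q) * Q)
      = (\<Sum>i<d. c i * complex_of_real (p (\<sigma> i)))"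
    by (simp add: conj_cancel[OF Q perm_mat_carrier] mix_value_perm_mat[OF permutes_inv[OF \<sigma>]]
        permutes_inv_inv[OF \<sigma>])
qed

lemma tr_orbit_is_max:
  assumes Q: "unitary_mat d Q"
    and eig: "red_state d dB psi = Q * diagm d (\<lambda>i. complex_of_real (p i)) * adj Q"
  shows "is_max {cmod (tr (U * (Q * diagm d lam * adj Q) * adj U * red_state d dB psi)) | U. unitary_mat d U}
           (best_value d lam p)"
proof -
  have Qc: "Q \<in> carrier_mat d d" using Q by (simp add: unitary_mat_def)
  obtain \<sigma> where \<sigma>: "\<sigma> permutes {..<d}"
    and opt: "cmod (\<Sum>i<d. lam i * complex_of_real (p (\<sigma> i))) = best_value d lam p"
    by (rule best_value_attained)
  define U0 where "U0 = Q * perm_mat d \<sigma> * adj Q"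
  have U0: "unitary_mat d U0"
    unfolding U0_def by (rule unitary_mult[OF unitary_mult[OF Q unitary_perm_mat[OF \<sigma>]] unitary_adj[OF Q]])
  have "cmod (tr (U0 * (Q * diagm d lam * adj Q) * adj U0 * red_state d dB psi)) = best_value d lam p"
    unfolding tr_orbit[OF Q unitary_carrier[OF U0] eig]
    unfolding U0_def mix_value_transported_perm(2)[OF Q \<sigma>] by (rule opt)
  moreover have "cmod (tr (U * (Q * diagm d lam * adj Q) * adj U * red_state d dB psi))
      \<le> best_value d lam p" if U: "unitary_mat d U" for U
    unfolding tr_orbit[OF Q unitary_carrier[OF U] eig]
    by (rule mix_value_le_best[OF unitary_mult[OF unitary_mult[OF unitary_adj[OF Q] unitary_adj[OF U]] Q]])
  ultimately show ?thesis unfolding is_max_def using U0 by force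
qed

lemma mix_orbit_is_max:
  assumes Q: "unitary_mat d Q"
  shows "is_max {cmod (mix_value d lam p (adj Q * U * Q)) | U. unitary_mat d U} (best_value d lam p)"
    and "\<exists>\<sigma>. \<sigma> permutes {..<d}
           \<and> cmod (mix_value d lam p (adj Q * (Q * perm_mat d \<sigma> * adj Q) * Q)) = best_value d lam p"
proof -
  obtain \<sigma> where \<sigma>: "\<sigma> permutes {..<d}"
    and opt: "cmod (\<Sum>i<d. lam i * complex_of_real (p (\<sigma> i))) = best_value d lam p"
    by (rule best_value_attained)
  have \<sigma>': "inv_into UNIV \<sigma> permutes {..<d}" by (rule permutes_inv[OF \<sigma>])
  have attained: "cmod (mix_value d lam p (adj Q * (Q * perm_mat d (inv_into UNIV \<sigma>) * adj Q) * Q))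
      = best_value d lam p"
    using opt by (simp add: mix_value_transported_perm(1)[OF Q \<sigma>'] permutes_inv_inv[OF \<sigma>])
  then show "\<exists>\<sigma>. \<sigma> permutes {..<d}
      \<and> cmod (mix_value d lam p (adj Q * (Q * perm_mat d \<sigma> * adj Q) * Q)) = best_value d lam p"
    using \<sigma>' by blast
  have "unitary_mat d (Q * perm_mat d (inv_into UNIV \<sigma>) * adj Q)"
    by (rule unitary_mult[OF unitary_mult[OF Q unitary_perm_mat[OF \<sigma>']] unitary_adj[OF Q]])
  then have "best_value d lam p \<in> {cmod (mix_value d lam p (adj Q * U * Q)) | U. unitary_mat d U}"
    using attained by force
  moreover have "cmod (mix_value d lam p (adj Q * U * Q)) \<le> best_value d lam p"
    if "unitary_mat d U" for U
    by (rule mix_value_le_best[OF unitary_mult[OF unitary_mult[OF unitary_adj[OF Q] that] Q]])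
  ultimately show "is_max {cmod (mix_value d lam p (adj Q * U * Q)) | U. unitary_mat d U}
      (best_value d lam p)"
    unfolding is_max_def by blast
qed

lemma expval_W_set_le:
  assumes Q: "unitary_mat d Q" and lam: "\<forall>i<d. cmod (lam i) = 1"
    and eig: "red_state d dB psi = Q * diagm d (\<lambda>i. complex_of_real (p i)) * adj Q"
    and W: "W \<in> W_set d lam"
  shows "cmod (expval d dB psi W) \<le> best_value d lam p"
proof -
  obtain R where R: "unitary_mat d R" and W_diag: "W = R * diagm d lam * adj R"
    using W W_set_iff[OF lam] by blast
  have "expval d dB psi W = mix_value d lam p (adj R * Q)"
    unfolding expval_tr[OF unitary_carrier[OF unitary_mult[OF unitary_mult[OF R unitary_diagm[OF lam]]
        unitary_adj[OF R]]]] W_diag eig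
    by (rule tr_conj_diagm[OF unitary_carrier[OF R] unitary_carrier[OF Q]])
  then show ?thesis using mix_value_le_best[OF unitary_mult[OF unitary_adj[OF R] Q]] by simp
qed

text \<open>Attainment by a \<open>W\<close> diagonal in the eigenbasis of \<open>\<rho>\<close>: permute \<open>\<lambda>\<close> optimally.\<close>

lemma optimal_W:
  assumes Q: "unitary_mat d Q" and lam: "\<forall>i<d. cmod (lam i) = 1"
    and eig: "red_state d dB psi = Q * diagm d (\<lambda>i. complex_of_real (p i)) * adj Q"
  shows "\<exists>W \<in> W_set d lam. cmod (expval d dB psi W) = best_value d lam p
           \<and> (\<exists>\<mu>. W = Q * diagm d \<mu> * adj Q)"
proof -
  have Qc: "Q \<in> carrier_mat d d" and Q1: "adj Q * Q = 1\<^sub>m d" using Q by (simp_all add: unitary_mat_def)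
  obtain \<sigma> where \<sigma>: "\<sigma> permutes {..<d}"
    and opt: "cmod (\<Sum>i<d. lam i * complex_of_real (p (\<sigma> i))) = best_value d lam p"
    by (rule best_value_attained)
  define P where "P = perm_mat d \<sigma>"
  have P: "unitary_mat d P" and Pc: "P \<in> carrier_mat d d"
    unfolding P_def by (simp_all add: unitary_perm_mat[OF \<sigma>])
  define W where "W = (Q * P) * diagm d lam * adj (Q * P)"
  have QP: "unitary_mat d (Q * P)" by (rule unitary_mult[OF Q P])
  have "W \<in> W_set d lam" unfolding W_def W_set_iff[OF lam] using QP by blast
  moreover have "adj (Q * P) * Q = adj P"
    using Qc Pc Q1 by (simp add: adj_mult[OF Qc Pc] assoc_mult_mat[OF adj_carrier[OF Pc] adj_carrier[OF Qc] Qc])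
  then have "expval d dB psi W = (\<Sum>i<d. lam i * complex_of_real (p (\<sigma> i)))"
    unfolding expval_tr[OF unitary_carrier[OF unitary_mult[OF unitary_mult[OF QP unitary_diagm[OF lam]]
        unitary_adj[OF QP]]]] W_def eig tr_conj_diagm[OF unitary_carrier[OF QP] Qc]
    by (simp add: P_def adj_perm_mat[OF \<sigma>] mix_value_perm_mat[OF permutes_inv[OF \<sigma>]]
        permutes_inv_inv[OF \<sigma>])
  moreover have "W = Q * (P * diagm d lam * adj P) * adj Q"
    unfolding W_def by (rule conj_conj[OF Qc Pc diagm_carrier, symmetric])
  then have "W = Q * diagm d (\<lambda>i. lam (inv_into UNIV \<sigma> i)) * adj Q"
    unfolding P_def perm_mat_conj_diagm[OF \<sigma>] .
  ultimately show ?thesis using opt by (intro bexI[of _ W]) auto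
qed

lemma F_Lam_eq:
  assumes Q: "unitary_mat d Q" and lam: "\<forall>i<d. cmod (lam i) = 1"
    and eig: "red_state d dB psi = Q * diagm d (\<lambda>i. complex_of_real (p i)) * adj Q"
  shows "F_Lam d dB lam psi = (best_value d lam p)\<^sup>2"
  unfolding F_Lam_def
proof (rule cSup_eq_maximum)
  obtain W where "W \<in> W_set d lam" "cmod (expval d dB psi W) = best_value d lam p"
    using optimal_W[OF Q lam eig] by blast
  then show "(best_value d lam p)\<^sup>2 \<in> fid d dB psi ` W_set d lam"
    unfolding fid_def by (intro rev_image_eqI[of W]) simp_all
next
  fix x assume "x \<in> fid d dB psi ` W_set d lam"
  then show "x \<le> (best_value d lam p)\<^sup>2"
    using expval_W_set_le[OF Q lam eig] by (auto simp: fid_def intro!: power_mono)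
qed

theorem lemma1:
  fixes d dB :: nat and psi :: "nat \<Rightarrow> nat \<Rightarrow> complex"
    and lam :: "nat \<Rightarrow> complex" and p :: "nat \<Rightarrow> real" and Q :: "complex mat"
  assumes dle: "d \<le> dB"
    and unit: "(\<Sum>a<d. \<Sum>b<dB. (cmod (psi a b))\<^sup>2) = 1"
    and lam_unimod: "\<forall>i<d. cmod (lam i) = 1"
    and Q_unitary: "unitary_mat d Q"
    and eig: "red_state d dB psi = Q * diagm d (\<lambda>i. complex_of_real (p i)) * adj Q"
  defines "V \<equiv> Q * diagm d lam * adj Q"
    and "g \<equiv> (\<lambda>U. cmod (\<Sum>i<d. lam i * (\<Sum>j<d. complex_of_real (p j * (cmod ((adj Q * U * Q) $$ (i,j)))\<^sup>2))))"
  shows "is_max {cmod (tr (U * V * adj U * red_state d dB psi)) | U. unitary_mat d U}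
                (sqrt (F_Lam d dB lam psi))
       \<and> is_max {g U | U. unitary_mat d U} (sqrt (F_Lam d dB lam psi))
       \<and> (\<exists>\<sigma>. \<sigma> permutes {..<d} \<and> g (Q * perm_mat d \<sigma> * adj Q) = sqrt (F_Lam d dB lam psi))
       \<and> is_max {cmod (\<Sum>i<d. lam i * complex_of_real (p (\<sigma> i))) | \<sigma>. \<sigma> permutes {..<d}}
                (sqrt (F_Lam d dB lam psi))
       \<and> (\<exists>W \<in> W_set d lam. fid d dB psi W = F_Lam d dB lam psi
             \<and> (\<exists>\<mu>. W = Q * diagm d \<mu> * adj Q)
             \<and> W * red_state d dB psi = red_state d dB psi * W)"
proof -
  have F: "F_Lam d dB lam psi = (best_value d lam p)\<^sup>2"
    by (rule F_Lam_eq[OF Q_unitary lam_unimod eig])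
  have "best_value d lam p \<ge> 0"
    using best_value_is_max[where d = d and c = lam and p = p] unfolding is_max_def by auto
  then have sqrt_F: "sqrt (F_Lam d dB lam psi) = best_value d lam p" by (simp add: F)
  have g_mix: "g = (\<lambda>U. cmod (mix_value d lam p (adj Q * U * Q)))"
    unfolding g_def mix_value_def ..
  obtain W \<mu> where W: "W \<in> W_set d lam" "cmod (expval d dB psi W) = best_value d lam p"
    and W_diag: "W = Q * diagm d \<mu> * adj Q"
    using optimal_W[OF Q_unitary lam_unimod eig] by blast
  have "fid d dB psi W = F_Lam d dB lam psi" using W(2) by (simp add: fid_def F)
  moreover have "W * red_state d dB psi = red_state d dB psi * W"
    unfolding W_diag eig by (rule conj_diagm_commute[OF Q_unitary])
  ultimately show ?thesis
    unfolding sqrt_F V_def g_mix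
    using tr_orbit_is_max[OF Q_unitary eig] mix_orbit_is_max[OF Q_unitary] best_value_is_max W W_diag
    by blast
qed

end
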